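(* Let $p,q$ be integers with $1+|p|<|q|$ and $\gcd(p,q)=1$, and assume $t(x)=x^2+px-q$ is irreducible in $\mathbb{Z}[x]$. Then every nonzero endomorphism $\phi$ of $\mathbb{Z}^2$ with nontrivial kernel is not FA-recognizable with respect to $\psi_{p,q}$, i.e. the relation $\{(u,v)\in\mathrm{Dom}_{p,q}^2:\psi_{p,q}(v)=\phi(\psi_{p,q}(u))\}$ is not FA-recognizable.
   Context: For $f,g\in\mathbb{Z}[x]$ write $f\sim g$ if $t$ divides $f-g$; identify $\mathbb{Z}^2$ with the additive group of $\mathbb{Z}[x]/\langle t\rangle$ via $(h_1,h_2)\mapsto[h_1x+h_2]_\sim$. Let $\Sigma_q=\{-(|q|-1),\dots,|q|-1\}$ with the order $-(|q|-1)<\dots<|q|-1$; a string $a_0a_1\dots a_n\in\Sigma_q^*$ represents the polynomial $a_nx^n+\dots+a_1x+a_0$, and two strings are equivalent if their polynomials are $\sim$-equivalent. $\mathrm{Dom}_{p,q}$ is the set of $w\in\Sigma_q^*$ such that no string strictly smaller than $w$ in the length-lexicographic order on $\Sigma_q^*$ is equivalent to $w$, and $\psi_{p,q}:\mathrm{Dom}_{p,q}\to\mathbb{Z}^2$ sends $w$ to the $\sim$-class of the polynomial it represents. Convolution of strings pads shorter strings with a new symbol $\diamond$ and stacks them letterwise; a relation on strings is FA-recognizable if the set of convolutions of its tuples is accepted by a finite automaton. *)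

theory Defs
  imports "HOL-Computational_Algebra.Polynomial" "HOL-Library.Product_Plus"
begin

definition Sigma :: "int \<Rightarrow> int set" where
  "Sigma q = {-(\<bar>q\<bar> - 1) .. \<bar>q\<bar> - 1}"

definition strings :: "int \<Rightarrow> int list set" where
  "strings q = {w. set w \<subseteq> Sigma q}"

definition tpoly :: "int \<Rightarrow> int \<Rightarrow> int poly" where
  "tpoly p q = [:-q, p, 1:]"

text \<open>The string a0 a1 ... an represents an x^n + ... + a1 x + a0, i.e. Poly [a0,...,an].\<close>
definition str_equiv :: "int \<Rightarrow> int \<Rightarrow> int list \<Rightarrow> int list \<Rightarrow> bool" where
  "str_equiv p q u w \<longleftrightarrow> tpoly p q dvd (Poly u - Poly w)"

definition llex_less :: "int list \<Rightarrow> int list \<Rightarrow> bool" where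
  "llex_less u w \<longleftrightarrow> (u, w) \<in> lenlex {(a, b). a < b}"

definition Dom :: "int \<Rightarrow> int \<Rightarrow> int list set" where
  "Dom p q = {w \<in> strings q. \<not> (\<exists>u \<in> strings q. llex_less u w \<and> str_equiv p q u w)}"

text \<open>psi sends w to the pair (h1,h2) with h1 x + h2 equivalent to the polynomial of w.\<close>
definition psi :: "int \<Rightarrow> int \<Rightarrow> int list \<Rightarrow> int \<times> int" where
  "psi p q w = (THE h. tpoly p q dvd (Poly w - [:snd h, fst h:]))"

text \<open>Convolution of two strings; None plays the role of the padding symbol diamond.\<close>
definition conv :: "'a list \<Rightarrow> 'a list \<Rightarrow> ('a option \<times> 'a option) list" where
  "conv u v = map (\<lambda>i. (if i < length u then Some (u ! i) else None,
                          if i < length v then Some (v ! i) else None))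
                  [0..<max (length u) (length v)]"

definition FA_recognizable_lang :: "'a list set \<Rightarrow> bool" where
  "FA_recognizable_lang L \<longleftrightarrow>
     (\<exists>(Q :: nat set) (\<delta> :: nat \<Rightarrow> 'a \<Rightarrow> nat) s F.
        finite Q \<and> s \<in> Q \<and> (\<forall>r \<in> Q. \<forall>a. \<delta> r a \<in> Q) \<and> F \<subseteq> Q \<and>
        L = {w. foldl \<delta> s w \<in> F})"

definition FA_recognizable_rel :: "('a list \<times> 'a list) set \<Rightarrow> bool" where
  "FA_recognizable_rel R \<longleftrightarrow> FA_recognizable_lang {conv u v | u v. (u, v) \<in> R}"

definition group_endo :: "(int \<times> int \<Rightarrow> int \<times> int) \<Rightarrow> bool" where
  "group_endo \<phi> \<longleftrightarrow> (\<forall>a b. \<phi> (a + b) = \<phi> a + \<phi> b)"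

end

theory Submission
  imports Defs "HOL-Computational_Algebra.Polynomial_Factorial" "HOL-Library.FuncSet"
begin

(*
  With v = [] (which is canonical and has value 0) the relation contains (u, []) exactly when
  phi (psi u) = 0, so an automaton for it yields one for the set K of canonical strings whose
  value lies in the kernel of phi.  That kernel is a line {h. det (k, h) = 0}.  Strings of
  length n with digits in 0..|q|-1 have |q|^n distinct values, whereas det (k, psi w) grows
  only like (|q| - 1/2)^n; by pigeonhole, differences of such strings represent infinitely
  many points of the line, so K is infinite.  Pumping a long word abc of K gives ac, abc,
  abbc in K.  The differences of their values are parallel kernel vectors, while the
  polynomial differences satisfy D2 = x^|b| D1, and t does not divide D1 because abc is
  canonical and ac is shorter.  Since t is prime, t divides c0 x^|b| - c1 with c0 ~= 0; this
  is impossible because the x-coefficient of x^m modulo t is congruent to (-p)^(m-1)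
  modulo q, which is coprime to q.
*)

section \<open>Normal forms modulo t\<close>

definition pair_poly :: "int \<times> int \<Rightarrow> int poly" where
  "pair_poly h = [:snd h, fst h:]"

lemma pair_poly_diff: "pair_poly h - pair_poly h' = pair_poly (h - h')"
  by (simp add: pair_poly_def)

lemma pair_poly_eq_0_iff: "pair_poly h = 0 \<longleftrightarrow> h = 0"
  by (cases h) (auto simp: pair_poly_def zero_prod_def)

lemma degree_tpoly [simp]: "degree (tpoly p q) = 2"
  by (simp add: tpoly_def)

lemma tpoly_nonzero [simp]: "tpoly p q \<noteq> 0"
  by (simp add: tpoly_def)

lemma tpoly_dvd_linear_imp_0:
  assumes "tpoly p q dvd r" "degree r \<le> 1" shows "r = 0"
  using dvd_imp_degree_le[OF assms(1)] assms(2) by fastforce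

lemma tpoly_dvd_pair_poly_diff_imp_eq:
  assumes "tpoly p q dvd pair_poly h - pair_poly h'" shows "h = h'"
proof -
  have "degree (pair_poly (h - h')) \<le> 1" by (simp add: pair_poly_def)
  with assms have "pair_poly (h - h') = 0" by (simp add: pair_poly_diff tpoly_dvd_linear_imp_0)
  then show ?thesis by (simp add: pair_poly_eq_0_iff)
qed

lemma tpoly_remainder_exists: "\<exists>h. tpoly p q dvd f - pair_poly h"
proof -
  obtain g r where "pseudo_divmod f (tpoly p q) = (g, r)" by fastforce
  from pseudo_divmod[OF tpoly_nonzero this] have "f = tpoly p q * g + r" "degree r \<le> 1"
    by (auto simp: tpoly_def)
  moreover from this(2) have "r = pair_poly (coeff r 1, coeff r 0)"
    by (auto simp: pair_poly_def poly_eq_iff coeff_pCons intro!: coeff_eq_0 split: nat.split)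
  ultimately show ?thesis by (metis add_diff_cancel_right' dvd_triv_left)
qed

lemma psi_unique:
  assumes "tpoly p q dvd Poly w - pair_poly h" shows "psi p q w = h"
  unfolding psi_def pair_poly_def[symmetric]
proof (rule the_equality)
  fix h' assume "tpoly p q dvd Poly w - pair_poly h'"
  from dvd_diff[OF this assms] have "tpoly p q dvd pair_poly h - pair_poly h'" by simp
  then show "h' = h" using tpoly_dvd_pair_poly_diff_imp_eq by metis
qed (fact assms)

lemma tpoly_dvd_Poly_minus_psi: "tpoly p q dvd Poly w - pair_poly (psi p q w)"
  using tpoly_remainder_exists[of p q "Poly w"] psi_unique by metis

lemma psi_eq_iff: "psi p q u = psi p q w \<longleftrightarrow> tpoly p q dvd Poly u - Poly w"
proof
  assume "psi p q u = psi p q w"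
  with dvd_diff[OF tpoly_dvd_Poly_minus_psi tpoly_dvd_Poly_minus_psi, of p q u w]
  show "tpoly p q dvd Poly u - Poly w" by simp
next
  assume "tpoly p q dvd Poly u - Poly w"
  from dvd_add[OF this tpoly_dvd_Poly_minus_psi[of p q w]]
  show "psi p q u = psi p q w" by (intro psi_unique) simp
qed

lemma tpoly_dvd_Poly_diff_minus_psi_diff:
  "tpoly p q dvd (Poly u - Poly w) - pair_poly (psi p q u - psi p q w)"
proof -
  have "(Poly u - Poly w) - pair_poly (psi p q u - psi p q w)
      = (Poly u - pair_poly (psi p q u)) - (Poly w - pair_poly (psi p q w))"
    by (simp flip: pair_poly_diff)
  also have "tpoly p q dvd \<dots>" by (intro dvd_diff tpoly_dvd_Poly_minus_psi)
  finally show ?thesis .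
qed

lemma psi_diff: "Poly d = Poly u - Poly w \<Longrightarrow> psi p q d = psi p q u - psi p q w"
  using tpoly_dvd_Poly_diff_minus_psi_diff psi_unique by metis

lemma psi_Nil: "psi p q [] = 0"
  by (rule psi_unique) (simp add: pair_poly_def)

lemma tpoly_dvd_pCons:
  assumes "tpoly p q dvd f - [:b, a:]"
  shows "tpoly p q dvd pCons d f - [:q * a + d, b - p * a:]"
proof -
  have "pCons d f - [:q * a + d, b - p * a:] = pCons 0 (f - [:b, a:]) + smult a (tpoly p q)"
    by (simp add: tpoly_def algebra_simps)
  also have "\<dots> = [:0, 1:] * (f - [:b, a:]) + smult a (tpoly p q)"
    by simp
  also have "tpoly p q dvd \<dots>"
    using assms by (intro dvd_add dvd_mult dvd_smult) simp_all
  finally show ?thesis .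
qed

lemma psi_Cons:
  "psi p q (d # w) = (snd (psi p q w) - p * fst (psi p q w), q * fst (psi p q w) + d)"
  using tpoly_dvd_pCons[OF tpoly_dvd_Poly_minus_psi[unfolded pair_poly_def]]
  by (intro psi_unique) (simp add: pair_poly_def)

lemma tpoly_dvd_monom_minus_linear:
  "\<exists>a b. tpoly p q dvd monom 1 (Suc n) - [:b, a:] \<and> q dvd b \<and> q dvd a - (-p) ^ n"
proof (induction n)
  case 0
  have "monom 1 (Suc 0) - [:0, 1:] = (0 :: int poly)" by (simp add: monom_Suc)
  then show ?case by (intro exI[of _ 1] exI[of _ 0]) simp
next
  case (Suc n)
  then obtain a b where ab: "tpoly p q dvd monom 1 (Suc n) - [:b, a:]" "q dvd b"
      "q dvd a - (-p) ^ n" by blast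
  from tpoly_dvd_pCons[OF ab(1), of 0]
  have "tpoly p q dvd monom 1 (Suc (Suc n)) - [:q * a, b - p * a:]" by (simp add: monom_Suc)
  moreover have "q dvd b - p * (a - (-p) ^ n)" using ab(2,3) by simp
  then have "q dvd b - p * a - (-p) ^ Suc n" by (simp add: algebra_simps)
  ultimately show ?case by (intro exI[of _ "b - p * a"] exI[of _ "q * a"]) simp
qed

lemma tpoly_not_dvd_monom_minus_const:
  assumes "gcd p q = 1" "\<bar>q\<bar> > 1" "m \<ge> 1" "c \<noteq> 0"
  shows "\<not> tpoly p q dvd smult c (monom 1 m) - [:c':]"
proof
  assume dvd: "tpoly p q dvd smult c (monom 1 m) - [:c':]"
  obtain n where n: "m = Suc n" using assms(3) by (cases m) auto
  then obtain a b where ab: "tpoly p q dvd monom 1 m - [:b, a:]" "q dvd a - (-p) ^ n"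
    using tpoly_dvd_monom_minus_linear[of p q n] by blast
  have "[:c * b - c', c * a:] = (smult c (monom 1 m) - [:c':]) - smult c (monom 1 m - [:b, a:])"
    by (simp add: smult_diff_right)
  also have "tpoly p q dvd \<dots>" using dvd ab(1) by (simp add: dvd_diff dvd_smult)
  finally have "[:c * b - c', c * a:] = 0" by (rule tpoly_dvd_linear_imp_0) simp
  with assms(4) have "q dvd (-p) ^ n" using ab(2) by (simp add: dvd_minus_iff)
  moreover have "coprime q ((-p) ^ n)"
    using assms(1) by (simp add: coprime_iff_gcd_eq_1[symmetric] coprime_commute)
  ultimately have "is_unit q" by (metis coprime_common_divisor dvd_refl)
  with assms(2) show False by simp
qed

section \<open>Canonical representatives\<close>

lemma llex_less_irrefl: "\<not> llex_less u u"
  unfolding llex_less_def by (rule lenlex_irreflexive) simp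

lemma llex_less_trans: "llex_less u v \<Longrightarrow> llex_less v w \<Longrightarrow> llex_less u w"
  unfolding llex_less_def by (erule lenlex_trans) (auto simp: trans_def)

lemma llex_less_if_shorter: "length u < length w \<Longrightarrow> llex_less u w"
  by (simp add: llex_less_def lenlex_conv)

lemma llex_less_imp_length_le: "llex_less u w \<Longrightarrow> length u \<le> length w"
  unfolding llex_less_def by (rule lenlex_length)

lemma finite_has_llex_minimal:
  assumes "finite S" "S \<noteq> {}" shows "\<exists>m\<in>S. \<forall>u\<in>S. \<not> llex_less u m"
  using assms
proof (induction S rule: finite_ne_induct)
  case (singleton x) then show ?case using llex_less_irrefl by auto
next
  case (insert x F)
  then obtain m where m: "m \<in> F" "\<forall>u\<in>F. \<not> llex_less u m" by blast
  show ?case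
  proof (cases "llex_less x m")
    case True
    then have "\<forall>u\<in>insert x F. \<not> llex_less u x"
      using m llex_less_irrefl llex_less_trans by blast
    then show ?thesis by blast
  qed (use m in blast)
qed

lemma finite_strings_length_le: "finite {w \<in> strings q. length w \<le> n}"
  using finite_lists_length_le[of "Sigma q" n] by (simp add: strings_def Sigma_def)

lemma Nil_in_Dom: "[] \<in> Dom p q"
  by (simp add: Dom_def strings_def llex_less_def)

lemma Dom_subset_strings: "Dom p q \<subseteq> strings q"
  by (auto simp: Dom_def)

lemma Dom_representative:
  assumes "w \<in> strings q" obtains u where "u \<in> Dom p q" "str_equiv p q u w"
proof -
  let ?S = "{u \<in> strings q. length u \<le> length w \<and> str_equiv p q u w}"
  have "finite ?S" by (rule finite_subset[OF _ finite_strings_length_le]) auto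
  moreover have "w \<in> ?S" using assms by (simp add: str_equiv_def)
  ultimately obtain m where m: "m \<in> ?S" "\<forall>u\<in>?S. \<not> llex_less u m"
    using finite_has_llex_minimal[of ?S] by blast
  have "m \<in> Dom p q"
    unfolding Dom_def
  proof safe
    show "m \<in> strings q" using m by simp
  next
    fix u assume u: "u \<in> strings q" "llex_less u m" "str_equiv p q u m"
    have "length u \<le> length w" using llex_less_imp_length_le[OF u(2)] m(1) by simp
    moreover have "str_equiv p q u w"
      using dvd_add[OF u(3)[unfolded str_equiv_def], of "Poly m - Poly w"] m(1)
      by (simp add: str_equiv_def)
    ultimately show False using m u by blast
  qed
  with m show thesis using that by blast
qed

section \<open>Kernels of endomorphisms of the lattice\<close>

definition det2 :: "int \<times> int \<Rightarrow> int \<times> int \<Rightarrow> int" where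
  "det2 a b = fst a * snd b - snd a * fst b"

definition zscale :: "int \<Rightarrow> int \<times> int \<Rightarrow> int \<times> int" where
  "zscale n h = (n * fst h, n * snd h)"

lemma zscale_eq_0_iff: "zscale n h = 0 \<longleftrightarrow> n = 0 \<or> h = 0"
  by (cases h) (auto simp: zscale_def zero_prod_def)

lemma zscale_zero_right [simp]: "zscale n 0 = 0"
  by (simp add: zscale_def zero_prod_def)

lemma zscale_det2_decomp: "zscale (det2 k h) z = zscale (det2 z h) k + zscale (det2 k z) h"
  by (simp add: zscale_def det2_def algebra_simps)

lemma det2_diff_right: "det2 k (a - b) = det2 k a - det2 k b"
  by (simp add: det2_def algebra_simps)

lemma det2_eq_0_imp_parallel:
  assumes "v \<noteq> 0" "det2 v w = 0" obtains c c' where "c \<noteq> 0" "zscale c w = zscale c' v"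
proof
  let ?v' = "(- snd v, fst v)"
  show "det2 v ?v' \<noteq> 0"
    using assms(1) by (cases v) (auto simp: det2_def zero_prod_def add_nonneg_eq_0_iff)
  show "zscale (det2 v ?v') w = zscale (det2 w ?v') v"
    using zscale_det2_decomp[of v ?v' w] assms(2) by (simp add: zscale_def)
qed

lemma group_endo_iff_additive: "group_endo \<phi> \<longleftrightarrow> additive \<phi>"
  by (simp add: group_endo_def additive_def)

lemma additive_zscale:
  fixes \<phi> :: "int \<times> int \<Rightarrow> int \<times> int"
  assumes "additive \<phi>" shows "\<phi> (zscale n h) = zscale n (\<phi> h)"
proof -
  interpret additive \<phi> by (fact assms)
  show ?thesis
  proof (induction n rule: int_induct[where k = 0])
    case (step1 i)
    have "\<phi> (zscale (i + 1) h) = \<phi> (zscale i h + h)"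
      by (cases h) (simp add: zscale_def algebra_simps)
    also have "\<dots> = zscale (i + 1) (\<phi> h)"
      by (simp only: add step1) (simp add: zscale_def prod_eq_iff algebra_simps)
    finally show ?case .
  next
    case (step2 i)
    have "\<phi> (zscale (i - 1) h) = \<phi> (zscale i h - h)"
      by (cases h) (simp add: zscale_def algebra_simps)
    also have "\<dots> = zscale (i - 1) (\<phi> h)"
      by (simp only: diff step2) (simp add: zscale_def prod_eq_iff algebra_simps)
    finally show ?case .
  qed (simp add: zscale_def zero flip: zero_prod_def)
qed

lemma additive_kernel_eq_line:
  fixes \<phi> :: "int \<times> int \<Rightarrow> int \<times> int"
  assumes "additive \<phi>" "\<phi> \<noteq> (\<lambda>_. 0)" "k \<noteq> 0" "\<phi> k = 0"
  shows "\<phi> h = 0 \<longleftrightarrow> det2 k h = 0"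
proof
  assume "\<phi> h = 0"
  show "det2 k h = 0"
  proof (rule ccontr)
    assume "det2 k h \<noteq> 0"
    have "\<phi> z = 0" for z
    proof -
      have "zscale (det2 k h) (\<phi> z) = \<phi> (zscale (det2 k h) z)"
        by (simp add: additive_zscale[OF assms(1)])
      also have "\<dots> = \<phi> (zscale (det2 z h) k) + \<phi> (zscale (det2 k z) h)"
        by (simp only: zscale_det2_decomp[of k h z] additive.add[OF assms(1)])
      also have "\<dots> = 0"
        by (simp add: additive_zscale[OF assms(1)] \<open>\<phi> h = 0\<close> assms(4) zscale_eq_0_iff)
      finally show ?thesis using \<open>det2 k h \<noteq> 0\<close> by (simp add: zscale_eq_0_iff)
    qed
    with assms(2) show False by auto
  qed
next
  assume "det2 k h = 0"
  then obtain c c' where "c \<noteq> 0" "zscale c h = zscale c' k"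
    using det2_eq_0_imp_parallel assms(3) by metis
  then have "zscale c (\<phi> h) = 0" by (metis additive_zscale[OF assms(1)] assms(4) zscale_eq_0_iff)
  with \<open>c \<noteq> 0\<close> show "\<phi> h = 0" by (simp add: zscale_eq_0_iff)
qed

section \<open>Many kernel elements are represented\<close>

definition pair_norm :: "real \<Rightarrow> int \<times> int \<Rightarrow> real" where
  "pair_norm \<rho> h = \<rho> * \<bar>of_int (fst h)\<bar> + \<bar>of_int (snd h)\<bar>"

lemma pair_norm_psi_Cons_le:
  fixes p q d :: int
  defines "Q \<equiv> of_int \<bar>q\<bar> :: real"
  defines "\<rho> \<equiv> Q - 1/2"
  assumes pq: "1 + \<bar>p\<bar> < \<bar>q\<bar>" and d: "\<bar>d\<bar> \<le> \<bar>q\<bar> - 1"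
  shows "pair_norm \<rho> (psi p q (d # w)) \<le> \<rho> * pair_norm \<rho> (psi p q w) + (Q - 1)"
proof -
  obtain a b where ab: "psi p q w = (a, b)" by fastforce
  define x y P where "x = \<bar>real_of_int a\<bar>" and "y = \<bar>real_of_int b\<bar>" and "P = real_of_int \<bar>p\<bar>"
  have P: "0 \<le> P" "P \<le> Q - 2" and \<rho>: "1 \<le> \<rho>" using pq by (simp_all add: P_def Q_def \<rho>_def)
  have "\<bar>real_of_int (b - p * a)\<bar> \<le> y + P * x"
    unfolding x_def y_def P_def by (metis abs_mult abs_triangle_ineq4 of_int_abs of_int_diff of_int_mult)
  moreover have "\<bar>real_of_int (q * a + d)\<bar> \<le> Q * x + (Q - 1)"
    using d abs_triangle_ineq[of "of_int (q * a) :: real" "of_int d"]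
    by (simp add: Q_def x_def abs_mult flip: of_int_abs)
  ultimately have "pair_norm \<rho> (psi p q (d # w)) \<le> \<rho> * (y + P * x) + (Q * x + (Q - 1))"
    using \<rho> by (simp add: pair_norm_def psi_Cons ab add_mono mult_left_mono)
  also have "\<dots> \<le> \<rho> * y + (\<rho> * (Q - 2) + Q) * x + (Q - 1)"
  proof -
    have "\<rho> * P * x \<le> \<rho> * (Q - 2) * x"
      using P \<rho> by (intro mult_right_mono mult_left_mono) (simp_all add: x_def)
    then show ?thesis by (simp add: algebra_simps)
  qed
  also have "\<rho> * (Q - 2) + Q = \<rho> * \<rho> - (\<rho> - 1) / 2"
    by (simp add: \<rho>_def field_simps)
  also have "\<rho> * y + (\<rho> * \<rho> - (\<rho> - 1) / 2) * x + (Q - 1) \<le> \<rho> * (\<rho> * x + y) + (Q - 1)"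
  proof -
    have "0 \<le> (\<rho> - 1) * x" using \<rho> by (simp add: x_def)
    then show ?thesis by (simp add: algebra_simps)
  qed
  finally show ?thesis by (simp add: pair_norm_def ab x_def y_def)
qed

lemma pair_norm_psi_le:
  fixes p q :: int
  defines "Q \<equiv> of_int \<bar>q\<bar> :: real"
  defines "\<rho> \<equiv> Q - 1/2"
  assumes pq: "1 + \<bar>p\<bar> < \<bar>q\<bar>" and w: "w \<in> strings q"
  shows "pair_norm \<rho> (psi p q w) + 2 * (Q - 1) \<le> 2 * (Q - 1) * \<rho> ^ length w"
  using w
proof (induction w)
  case Nil then show ?case by (simp add: pair_norm_def psi_Nil)
next
  case (Cons d w)
  have Q: "2 \<le> Q" using pq by (simp add: Q_def)
  have "\<bar>d\<bar> \<le> \<bar>q\<bar> - 1" using Cons.prems by (auto simp: strings_def Sigma_def)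
  from pair_norm_psi_Cons_le[OF pq this, of w]
  have "pair_norm \<rho> (psi p q (d # w)) + 2 * (Q - 1)
      \<le> \<rho> * pair_norm \<rho> (psi p q w) + (Q - 1) + 2 * (Q - 1)"
    by (simp add: Q_def \<rho>_def)
  also have "\<dots> \<le> \<rho> * (pair_norm \<rho> (psi p q w) + 2 * (Q - 1))"
  proof -
    have "0 \<le> (Q - 1) * (Q - 2)" using Q by simp
    then show ?thesis by (simp add: \<rho>_def algebra_simps)
  qed
  also have "\<dots> \<le> \<rho> * (2 * (Q - 1) * \<rho> ^ length w)"
    using Cons Q by (intro mult_left_mono) (simp_all add: strings_def \<rho>_def)
  finally show ?case by (simp add: mult_ac)
qed

lemma abs_det2_le_pair_norm:
  assumes "1 \<le> \<rho>"
  shows "\<bar>real_of_int (det2 k h)\<bar> \<le> real_of_int (\<bar>fst k\<bar> + \<bar>snd k\<bar>) * pair_norm \<rho> h"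
proof -
  define a b x y where "a = \<bar>real_of_int (fst k)\<bar>" and "b = \<bar>real_of_int (snd k)\<bar>"
    and "x = \<bar>real_of_int (fst h)\<bar>" and "y = \<bar>real_of_int (snd h)\<bar>"
  have "\<bar>real_of_int (det2 k h)\<bar> \<le> a * y + b * x"
    unfolding det2_def a_def b_def x_def y_def by (metis abs_mult abs_triangle_ineq4 of_int_diff of_int_mult)
  moreover have "b * x \<le> b * (\<rho> * x)" "0 \<le> a * (\<rho> * x)" "0 \<le> b * y"
    using assms by (auto simp: a_def b_def x_def y_def mult_le_cancel_right1 intro!: mult_left_mono)
  ultimately have "\<bar>real_of_int (det2 k h)\<bar> \<le> a * (\<rho> * x) + a * y + b * (\<rho> * x) + b * y"
    by linarith
  also have "\<dots> = real_of_int (\<bar>fst k\<bar> + \<bar>snd k\<bar>) * pair_norm \<rho> h"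
    by (simp add: pair_norm_def a_def b_def x_def y_def algebra_simps)
  finally show ?thesis .
qed

lemma exists_power_dominates:
  fixes Q \<rho> A M :: real
  assumes "0 \<le> \<rho>" "\<rho> < Q" "1 < Q"
  shows "\<exists>n. A * \<rho> ^ n + M < Q ^ n"
proof -
  have "(\<lambda>n. A * (\<rho> / Q) ^ n + M * (1 / Q) ^ n) \<longlonglongrightarrow> A * 0 + M * 0"
    using assms by (intro tendsto_intros LIMSEQ_power_zero) auto
  then have "eventually (\<lambda>n. A * (\<rho> / Q) ^ n + M * (1 / Q) ^ n < 1) sequentially"
    by (intro order_tendstoD(2)) auto
  then obtain n where "A * (\<rho> / Q) ^ n + M * (1 / Q) ^ n < 1"
    by (auto simp: eventually_sequentially)
  then have "Q ^ n * (A * (\<rho> / Q) ^ n + M * (1 / Q) ^ n) < Q ^ n"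
    using assms by simp
  moreover have "Q ^ n * (A * (\<rho> / Q) ^ n + M * (1 / Q) ^ n) = A * \<rho> ^ n + M"
    using assms by (simp add: power_divide field_simps)
  ultimately show ?thesis by auto
qed

lemma Poly_dvd_imp_eq_if_digits_nonneg:
  assumes "prime_elem (tpoly p q)" "length u = length w"
    and "set u \<subseteq> {0..\<bar>q\<bar> - 1}" "set w \<subseteq> {0..\<bar>q\<bar> - 1}"
    and "tpoly p q dvd Poly u - Poly w"
  shows "u = w"
  using assms(2-)
proof (induction u arbitrary: w)
  case (Cons d u)
  then obtain e w' where w: "w = e # w'" by (cases w) auto
  have dvd: "tpoly p q dvd pCons (d - e) (Poly u - Poly w')" using Cons.prems(4) w by simp
  then obtain g where "pCons (d - e) (Poly u - Poly w') = tpoly p q * g" by (elim dvdE)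
  from arg_cong[OF this, of "\<lambda>f. poly f 0"] have "q dvd d - e" by (simp add: tpoly_def)
  moreover have "\<bar>d - e\<bar> < \<bar>q\<bar>" using Cons.prems(2,3) w by auto
  ultimately have "d = e" using dvd_imp_le_int[of "d - e" q] by force
  with dvd have "tpoly p q dvd [:0, 1:] * (Poly u - Poly w')" by simp
  moreover have "\<not> tpoly p q dvd [:0, 1:]"
    using tpoly_dvd_linear_imp_0[of p q "[:0, 1:]"] by auto
  ultimately have "tpoly p q dvd Poly u - Poly w'"
    using assms(1) prime_elem_dvd_mult_iff by blast
  with Cons show ?case using w \<open>d = e\<close> by simp
qed simp

lemma Poly_map2_minus: "length u = length w \<Longrightarrow> Poly (map2 (-) u w) = Poly u - Poly w"
  by (induction u w rule: list_induct2) simp_all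

lemma map2_minus_in_strings:
  "set u \<subseteq> {0..\<bar>q\<bar> - 1} \<Longrightarrow> set w \<subseteq> {0..\<bar>q\<bar> - 1} \<Longrightarrow> map2 (-) u w \<in> strings q"
  by (induction u w rule: list_induct2') (auto simp: strings_def Sigma_def)

definition nonneg_digit_strings :: "int \<Rightarrow> nat \<Rightarrow> int list set" where
  "nonneg_digit_strings q n = {w. set w \<subseteq> {0..\<bar>q\<bar> - 1} \<and> length w = n}"

lemma card_nonneg_digit_strings: "card (nonneg_digit_strings q n) = nat \<bar>q\<bar> ^ n"
  using card_lists_length_eq[of "{0..\<bar>q\<bar> - 1}" n] by (simp add: nonneg_digit_strings_def)

lemma nonneg_digit_strings_subset_strings: "nonneg_digit_strings q n \<subseteq> strings q"
  by (auto simp: nonneg_digit_strings_def strings_def Sigma_def)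

lemma abs_det2_psi_le:
  fixes p q :: int
  defines "Q \<equiv> of_int \<bar>q\<bar> :: real"
  assumes pq: "1 + \<bar>p\<bar> < \<bar>q\<bar>" and w: "w \<in> strings q"
  shows "\<bar>real_of_int (det2 k (psi p q w))\<bar>
    \<le> real_of_int (\<bar>fst k\<bar> + \<bar>snd k\<bar>) * (2 * (Q - 1)) * (Q - 1/2) ^ length w"
proof -
  have Q: "1 \<le> Q - 1/2" "0 \<le> Q - 1" using pq by (simp_all add: Q_def)
  have "\<bar>real_of_int (det2 k (psi p q w))\<bar>
      \<le> real_of_int (\<bar>fst k\<bar> + \<bar>snd k\<bar>) * pair_norm (Q - 1/2) (psi p q w)"
    using Q(1) by (rule abs_det2_le_pair_norm)
  also have "\<dots> \<le> real_of_int (\<bar>fst k\<bar> + \<bar>snd k\<bar>) * (2 * (Q - 1) * (Q - 1/2) ^ length w)"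
    using pair_norm_psi_le[OF pq w] Q(2) by (intro mult_left_mono) (simp_all add: Q_def)
  finally show ?thesis by (simp add: mult.assoc)
qed

lemma exists_large_fiber:
  assumes pq: "1 + \<bar>p\<bar> < \<bar>q\<bar>"
  shows "\<exists>n y. M < card {w \<in> nonneg_digit_strings q n. det2 k (psi p q w) = y}"
proof -
  define Q where "Q = real_of_int \<bar>q\<bar>"
  define K where "K = real_of_int (\<bar>fst k\<bar> + \<bar>snd k\<bar>) * (2 * (Q - 1))"
  have Q: "2 \<le> Q" using pq by (simp add: Q_def)
  then have K: "0 \<le> K" by (simp add: K_def)
  obtain n where n: "(2 * real M * K) * (Q - 1/2) ^ n + real M < Q ^ n"
    using exists_power_dominates[of "Q - 1/2" Q "2 * real M * K" "real M"] Q by auto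
  define S where "S = nonneg_digit_strings q n"
  define g where "g w = det2 k (psi p q w)" for w
  define B where "B = \<lfloor>K * (Q - 1/2) ^ n\<rfloor>"
  have B: "0 \<le> B" using K Q by (simp add: B_def)
  have "g \<in> S \<rightarrow> {-B..B}"
  proof
    fix w assume "w \<in> S"
    then have "w \<in> strings q" "length w = n"
      using nonneg_digit_strings_subset_strings by (auto simp: S_def nonneg_digit_strings_def)
    then have "\<bar>real_of_int (g w)\<bar> \<le> K * (Q - 1/2) ^ n"
      using abs_det2_psi_le[OF pq, of w k] by (simp add: g_def K_def Q_def)
    then have "\<bar>g w\<bar> \<le> B" by (simp add: B_def le_floor_iff)
    then show "g w \<in> {-B..B}" by (simp add: abs_le_iff)
  qed
  moreover have "finite S" by (simp add: S_def nonneg_digit_strings_def finite_lists_length_eq)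
  ultimately obtain y where y: "card S \<le> card (g -` {y} \<inter> S) * card {-B..B}"
    using pigeonhole_card[of g S "{-B..B}"] B by auto
  have "real M * real_of_int B \<le> real M * (K * (Q - 1/2) ^ n)"
    by (intro mult_left_mono) (simp_all add: B_def)
  then have "real M * (2 * real_of_int B + 1) \<le> 2 * real M * K * (Q - 1/2) ^ n + real M"
    by (simp add: algebra_simps)
  also have "\<dots> < real (card S)"
    using n by (simp add: S_def card_nonneg_digit_strings Q_def)
  also have "\<dots> \<le> real (card (g -` {y} \<inter> S) * card {-B..B})"
    using y by (simp only: of_nat_le_iff)
  also have "\<dots> = real (card (g -` {y} \<inter> S)) * (2 * real_of_int B + 1)"
    using B by simp
  finally have "M < card (g -` {y} \<inter> S)"
    using B by (simp add: mult_less_cancel_right)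
  moreover have "g -` {y} \<inter> S = {w \<in> nonneg_digit_strings q n. det2 k (psi p q w) = y}"
    by (auto simp: S_def g_def)
  ultimately show ?thesis by auto
qed

lemma infinite_psi_on_line:
  assumes pq: "1 + \<bar>p\<bar> < \<bar>q\<bar>" and prime: "prime_elem (tpoly p q)"
  shows "infinite (psi p q ` {w \<in> strings q. det2 k (psi p q w) = 0})"
    (is "infinite ?P")
proof
  assume "finite ?P"
  obtain n y where "card ?P < card {w \<in> nonneg_digit_strings q n. det2 k (psi p q w) = y}"
    using exists_large_fiber[OF pq] by blast
  moreover define F where "F = {w \<in> nonneg_digit_strings q n. det2 k (psi p q w) = y}"
  ultimately have "card ?P < card F" by simp
  then obtain w0 where w0: "w0 \<in> F" by fastforce
  have digits: "length w = length w0" "set w \<subseteq> {0..\<bar>q\<bar> - 1}" "set w0 \<subseteq> {0..\<bar>q\<bar> - 1}"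
    if "w \<in> F" for w
    using that w0 by (auto simp: F_def nonneg_digit_strings_def)
  have "inj_on (\<lambda>w. psi p q w - psi p q w0) F"
  proof (rule inj_onI)
    fix u w assume "u \<in> F" "w \<in> F" "psi p q u - psi p q w0 = psi p q w - psi p q w0"
    then show "u = w"
      using Poly_dvd_imp_eq_if_digits_nonneg[OF prime] digits by (simp add: psi_eq_iff)
  qed
  moreover have "(\<lambda>w. psi p q w - psi p q w0) ` F \<subseteq> ?P"
  proof (rule image_subsetI)
    fix w assume "w \<in> F"
    have "psi p q (map2 (-) w w0) = psi p q w - psi p q w0"
      using digits[OF \<open>w \<in> F\<close>] by (simp add: psi_diff Poly_map2_minus)
    moreover have "map2 (-) w w0 \<in> strings q"
      using digits[OF \<open>w \<in> F\<close>] by (simp add: map2_minus_in_strings)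
    moreover have "det2 k (psi p q w - psi p q w0) = 0"
      using \<open>w \<in> F\<close> w0 by (simp add: F_def det2_diff_right)
    ultimately show "psi p q w - psi p q w0 \<in> ?P"
      by (intro image_eqI[where x = "map2 (-) w w0"]) simp_all
  qed
  ultimately have "card F \<le> card ?P" using \<open>finite ?P\<close> by (rule card_inj_on_le)
  with \<open>card ?P < card F\<close> show False by simp
qed

section \<open>Automata\<close>

lemma map_fst_conv: "map fst (conv u v) = map Some u @ replicate (length v - length u) None"
  by (rule nth_equalityI) (auto simp: conv_def nth_append)

lemma map_snd_conv: "map snd (conv u v) = map Some v @ replicate (length u - length v) None"
  by (rule nth_equalityI) (auto simp: conv_def nth_append)

lemma map_the_takeWhile_padded: "map the (takeWhile (\<lambda>x. x \<noteq> None) (map Some u @ replicate n None)) = u"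
  by (induction u) (auto simp: takeWhile_replicate)

lemma conv_inject: "conv u v = conv u' v' \<longleftrightarrow> u = u' \<and> v = v'"
  by (metis map_fst_conv map_snd_conv map_the_takeWhile_padded)

lemma conv_Nil_right: "conv u [] = map (\<lambda>a. (Some a, None)) u"
  by (rule nth_equalityI) (simp_all add: conv_def)

lemma FA_recognizable_rel_imp_lang_Nil_right:
  assumes "FA_recognizable_rel R" shows "FA_recognizable_lang {u. (u, []) \<in> R}"
proof -
  obtain Q :: "nat set" and \<delta> s F where A: "finite Q" "s \<in> Q" "\<forall>r\<in>Q. \<forall>a. \<delta> r a \<in> Q" "F \<subseteq> Q"
    "{conv u v | u v. (u, v) \<in> R} = {w. foldl \<delta> s w \<in> F}"
    using assms unfolding FA_recognizable_rel_def FA_recognizable_lang_def by blast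
  define \<delta>' where "\<delta>' = (\<lambda>r a. \<delta> r (Some a, None))"
  have "{u. (u, []) \<in> R} = {u. foldl \<delta>' s u \<in> F}"
  proof -
    have "(u, []) \<in> R \<longleftrightarrow> conv u [] \<in> {conv u v | u v. (u, v) \<in> R}" for u
      by (auto simp: conv_inject)
    then show ?thesis by (simp add: A(5) conv_Nil_right foldl_map \<delta>'_def)
  qed
  moreover have "\<forall>r\<in>Q. \<forall>a. \<delta>' r a \<in> Q" using A(3) by (simp add: \<delta>'_def)
  ultimately show ?thesis
    using A(1,2,4) unfolding FA_recognizable_lang_def by (intro exI[of _ Q] exI[of _ \<delta>']) blast
qed

lemma foldl_in_closed: "r \<in> Q \<Longrightarrow> \<forall>r\<in>Q. \<forall>a. \<delta> r a \<in> Q \<Longrightarrow> foldl \<delta> r w \<in> Q"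
  by (induction w arbitrary: r) auto

lemma foldl_pumping:
  assumes "finite Q" "s \<in> Q" "\<forall>r\<in>Q. \<forall>a. \<delta> r a \<in> Q" "card Q \<le> length w"
  obtains a b c where "w = a @ b @ c" "b \<noteq> []" "foldl \<delta> s (a @ c) = foldl \<delta> s w"
    "foldl \<delta> s (a @ b @ b @ c) = foldl \<delta> s w"
proof -
  define st where "st i = foldl \<delta> s (take i w)" for i
  have "st ` {..length w} \<subseteq> Q" using foldl_in_closed[OF assms(2,3)] by (auto simp: st_def)
  then have "card (st ` {..length w}) \<le> card Q" by (rule card_mono[OF assms(1)])
  then have "\<not> inj_on st {..length w}" using assms(4) by (intro pigeonhole) simp
  then obtain i j where "i \<le> length w" "j \<le> length w" "i \<noteq> j" "st i = st j"
    unfolding inj_on_def by auto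
  then obtain i j where ij: "i < j" "j \<le> length w" "st i = st j"
    by (metis linorder_neq_iff)
  define a b c where "a = take i w" and "b = drop i (take j w)" and "c = drop j w"
  have "a @ b = take j w"
    using ij by (metis a_def b_def append_take_drop_id less_imp_le_nat min.absorb1 take_take)
  then have w: "w = a @ b @ c" by (metis append.assoc append_take_drop_id c_def)
  have "foldl \<delta> (foldl \<delta> s a) b = st j" by (simp add: st_def flip: \<open>a @ b = take j w\<close>)
  also have "\<dots> = foldl \<delta> s a" using ij(3) by (simp add: st_def a_def)
  finally have loop: "foldl \<delta> (foldl \<delta> s a) b = foldl \<delta> s a" .
  have "b \<noteq> []" using ij by (simp add: b_def)
  moreover have "foldl \<delta> s (a @ c) = foldl \<delta> s w" using loop by (simp add: w)
  moreover have "foldl \<delta> s (a @ b @ b @ c) = foldl \<delta> s w" using loop by (simp add: w)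
  ultimately show thesis using that w by blast
qed

lemma FA_recognizable_lang_pumping:
  assumes "FA_recognizable_lang L"
  obtains N where "\<And>w. w \<in> L \<Longrightarrow> N \<le> length w \<Longrightarrow>
    \<exists>a b c. w = a @ b @ c \<and> b \<noteq> [] \<and> a @ c \<in> L \<and> a @ b @ b @ c \<in> L"
proof -
  obtain Q :: "nat set" and \<delta> s F where A: "finite Q" "s \<in> Q" "\<forall>r\<in>Q. \<forall>a. \<delta> r a \<in> Q"
    "L = {w. foldl \<delta> s w \<in> F}"
    using assms unfolding FA_recognizable_lang_def by blast
  show thesis
  proof
    fix w assume "w \<in> L" "card Q \<le> length w"
    from foldl_pumping[OF A(1-3) this(2)] obtain a b c where pump: "w = a @ b @ c" "b \<noteq> []"
      "foldl \<delta> s (a @ c) = foldl \<delta> s w" "foldl \<delta> s (a @ b @ b @ c) = foldl \<delta> s w" .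
    have "a @ c \<in> L" "a @ b @ b @ c \<in> L"
      using \<open>w \<in> L\<close> pump(3,4) by (simp_all only: A(4) mem_Collect_eq)
    with pump(1,2) show "\<exists>a b c. w = a @ b @ c \<and> b \<noteq> [] \<and> a @ c \<in> L \<and> a @ b @ b @ c \<in> L"
      by blast
  qed
qed

lemma FA_recognizable_lang_infinite_pumping:
  assumes "FA_recognizable_lang L" "infinite L" "L \<subseteq> lists A" "finite A"
  obtains a b c where "b \<noteq> []" "a @ c \<in> L" "a @ b @ c \<in> L" "a @ b @ b @ c \<in> L"
proof -
  obtain N where pump: "\<And>w. w \<in> L \<Longrightarrow> N \<le> length w \<Longrightarrow>
      \<exists>a b c. w = a @ b @ c \<and> b \<noteq> [] \<and> a @ c \<in> L \<and> a @ b @ b @ c \<in> L"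
    using FA_recognizable_lang_pumping[OF assms(1)] by blast
  have "\<not> L \<subseteq> {w. set w \<subseteq> A \<and> length w \<le> N}"
    using infinite_super[OF _ assms(2)] finite_lists_length_le[OF assms(4)] by blast
  then obtain w where "w \<in> L" "\<not> (set w \<subseteq> A \<and> length w \<le> N)" by blast
  with assms(3) have "w \<in> L" "N \<le> length w" by auto
  with pump that show thesis by blast
qed

section \<open>Pumping the kernel language\<close>

lemma pair_poly_zscale: "pair_poly (zscale c v) = smult c (pair_poly v)"
  by (simp add: pair_poly_def zscale_def)

lemma Poly_pump_diff:
  fixes a b c :: "'a :: comm_ring_1 list"
  shows "Poly (a @ b @ b @ c) - Poly (a @ b @ c) = monom 1 (length b) * (Poly (a @ b @ c) - Poly (a @ c))"
  by (simp add: Poly_append algebra_simps)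

lemma psi_pump_diffs_not_parallel:
  assumes "gcd p q = 1" "\<bar>q\<bar> > 1" "prime_elem (tpoly p q)" "b \<noteq> []" "c0 \<noteq> 0"
    and not_dvd: "\<not> tpoly p q dvd Poly (a @ b @ c) - Poly (a @ c)"
  shows "zscale c0 (psi p q (a @ b @ b @ c) - psi p q (a @ b @ c))
    \<noteq> zscale c1 (psi p q (a @ b @ c) - psi p q (a @ c))"
proof
  define D where "D = Poly (a @ b @ c) - Poly (a @ c)"
  define V1 V2 where "V1 = psi p q (a @ b @ c) - psi p q (a @ c)"
    and "V2 = psi p q (a @ b @ b @ c) - psi p q (a @ b @ c)"
  assume "zscale c0 V2 = zscale c1 V1"
  then have "smult c0 (pair_poly V2) = smult c1 (pair_poly V1)" by (metis pair_poly_zscale)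
  then have "D * (smult c0 (monom 1 (length b)) - [:c1:])
      = smult c0 (monom 1 (length b) * D - pair_poly V2) - smult c1 (D - pair_poly V1)"
    by (simp add: algebra_simps smult_diff_right)
  also have "tpoly p q dvd \<dots>"
    using tpoly_dvd_Poly_diff_minus_psi_diff[of p q "a @ b @ c" "a @ c"]
      tpoly_dvd_Poly_diff_minus_psi_diff[of p q "a @ b @ b @ c" "a @ b @ c"]
    by (simp add: D_def V1_def V2_def Poly_pump_diff dvd_diff dvd_smult)
  finally have "tpoly p q dvd smult c0 (monom 1 (length b)) - [:c1:]"
    using assms(3) not_dvd by (simp add: D_def prime_elem_dvd_mult_iff)
  moreover have "length b \<ge> 1" using assms(4) by (cases b) auto
  ultimately show False using tpoly_not_dvd_monom_minus_const[OF assms(1,2) _ assms(5)] by blast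
qed

definition kernel_strings :: "int \<Rightarrow> int \<Rightarrow> (int \<times> int \<Rightarrow> int \<times> int) \<Rightarrow> int list set" where
  "kernel_strings p q \<phi> = {u \<in> Dom p q. \<phi> (psi p q u) = 0}"

lemma FA_recognizable_kernel_strings:
  assumes "FA_recognizable_rel {(u, v). u \<in> Dom p q \<and> v \<in> Dom p q \<and> psi p q v = \<phi> (psi p q u)}"
  shows "FA_recognizable_lang (kernel_strings p q \<phi>)"
proof -
  have "kernel_strings p q \<phi>
      = {u. (u, []) \<in> {(u, v). u \<in> Dom p q \<and> v \<in> Dom p q \<and> psi p q v = \<phi> (psi p q u)}}"
    using Nil_in_Dom by (auto simp: kernel_strings_def psi_Nil)
  with FA_recognizable_rel_imp_lang_Nil_right[OF assms] show ?thesis by simp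
qed

lemma infinite_kernel_strings:
  fixes \<phi> :: "int \<times> int \<Rightarrow> int \<times> int"
  assumes pq: "1 + \<bar>p\<bar> < \<bar>q\<bar>" and prime: "prime_elem (tpoly p q)"
    and \<phi>: "additive \<phi>" "\<phi> \<noteq> (\<lambda>_. 0)" and k: "k \<noteq> 0" "\<phi> k = 0"
  shows "infinite (kernel_strings p q \<phi>)"
proof
  assume "finite (kernel_strings p q \<phi>)"
  moreover have "psi p q ` {w \<in> strings q. det2 k (psi p q w) = 0} \<subseteq> psi p q ` kernel_strings p q \<phi>"
  proof (rule image_subsetI)
    fix w assume w: "w \<in> {w \<in> strings q. det2 k (psi p q w) = 0}"
    then obtain u where u: "u \<in> Dom p q" "str_equiv p q u w" using Dom_representative by blast
    then have "psi p q u = psi p q w" by (simp add: psi_eq_iff str_equiv_def)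
    moreover have "\<phi> (psi p q w) = 0" using w additive_kernel_eq_line[OF \<phi> k] by simp
    ultimately show "psi p q w \<in> psi p q ` kernel_strings p q \<phi>"
      using u(1) by (intro image_eqI[where x = u]) (simp_all add: kernel_strings_def)
  qed
  ultimately show False
    using infinite_psi_on_line[OF pq prime, of k] by (meson finite_imageI finite_subset)
qed

lemma kernel_strings_not_pumpable:
  fixes \<phi> :: "int \<times> int \<Rightarrow> int \<times> int"
  assumes "gcd p q = 1" "\<bar>q\<bar> > 1" "prime_elem (tpoly p q)" and \<phi>: "additive \<phi>" "\<phi> \<noteq> (\<lambda>_. 0)"
    and "b \<noteq> []" and K: "a @ c \<in> kernel_strings p q \<phi>" "a @ b @ c \<in> kernel_strings p q \<phi>"
      "a @ b @ b @ c \<in> kernel_strings p q \<phi>"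
  shows False
proof -
  define V1 V2 where "V1 = psi p q (a @ b @ c) - psi p q (a @ c)"
    and "V2 = psi p q (a @ b @ b @ c) - psi p q (a @ b @ c)"
  have not_dvd: "\<not> tpoly p q dvd Poly (a @ b @ c) - Poly (a @ c)"
  proof
    assume "tpoly p q dvd Poly (a @ b @ c) - Poly (a @ c)"
    then have "str_equiv p q (a @ c) (a @ b @ c)"
      unfolding str_equiv_def by (subst dvd_minus_iff[symmetric]) simp
    moreover have "llex_less (a @ c) (a @ b @ c)" using \<open>b \<noteq> []\<close> by (simp add: llex_less_if_shorter)
    ultimately show False using K(1,2) by (auto simp: kernel_strings_def Dom_def)
  qed
  then have "V1 \<noteq> 0" by (simp add: V1_def psi_eq_iff)
  moreover have "\<phi> V1 = 0" "\<phi> V2 = 0"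
    using K by (simp_all add: V1_def V2_def additive.diff[OF \<phi>(1)] kernel_strings_def)
  ultimately have "det2 V1 V2 = 0" using additive_kernel_eq_line[OF \<phi>] by blast
  then obtain c0 c1 where "c0 \<noteq> 0" "zscale c0 V2 = zscale c1 V1"
    using det2_eq_0_imp_parallel \<open>V1 \<noteq> 0\<close> by metis
  with psi_pump_diffs_not_parallel[OF assms(1-3,6) \<open>c0 \<noteq> 0\<close> not_dvd] show False
    by (simp add: V1_def V2_def)
qed

theorem mainTheorem8:
  fixes p q :: int and \<phi> :: "int \<times> int \<Rightarrow> int \<times> int"
  assumes "1 + \<bar>p\<bar> < \<bar>q\<bar>"
    and "gcd p q = 1"
    and "irreducible (tpoly p q)"
    and "group_endo \<phi>"
    and "\<phi> \<noteq> (\<lambda>_. 0)"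
    and "\<exists>v. v \<noteq> 0 \<and> \<phi> v = 0"
  shows "\<not> FA_recognizable_rel
           {(u, v). u \<in> Dom p q \<and> v \<in> Dom p q \<and> psi p q v = \<phi> (psi p q u)}"
proof
  assume "FA_recognizable_rel {(u, v). u \<in> Dom p q \<and> v \<in> Dom p q \<and> psi p q v = \<phi> (psi p q u)}"
  then have "FA_recognizable_lang (kernel_strings p q \<phi>)" by (rule FA_recognizable_kernel_strings)
  have prime: "prime_elem (tpoly p q)" using assms(3) by (simp add: prime_elem_iff_irreducible)
  have additive: "additive \<phi>" using assms(4) by (simp add: group_endo_iff_additive)
  obtain k where "k \<noteq> 0" "\<phi> k = 0" using assms(6) by blast
  then have "infinite (kernel_strings p q \<phi>)"
    using infinite_kernel_strings[OF assms(1) prime additive assms(5)] by blast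
  moreover have "kernel_strings p q \<phi> \<subseteq> lists (Sigma q)"
    using Dom_subset_strings by (auto simp: kernel_strings_def strings_def)
  moreover have "finite (Sigma q)" by (simp add: Sigma_def)
  ultimately obtain a b c where "b \<noteq> []" "a @ c \<in> kernel_strings p q \<phi>"
    "a @ b @ c \<in> kernel_strings p q \<phi>" "a @ b @ b @ c \<in> kernel_strings p q \<phi>"
    using FA_recognizable_lang_infinite_pumping \<open>FA_recognizable_lang (kernel_strings p q \<phi>)\<close>
    by metis
  moreover have "1 < \<bar>q\<bar>" using assms(1) by simp
  ultimately show False using kernel_strings_not_pumpable[OF assms(2) _ prime additive assms(5)]
    by blast
qed

end
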